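(* Let $0 \neq q \in \mathbb{C}$ with $q^{2} \neq 1$, let $\xi = -(1+q)^{2}/(q-q^{-1})$, and define complex numbers $\phi_{\beta}$, $\beta \in \mathbb{Z}_{+}$, recursively by $\phi_{0} = 1$, $\phi_{1} = 1$, and $\phi_{\beta} = \phi_{\beta-1} + \xi [\beta-1]_{q^{2}} \phi_{\beta-2}$ for $\beta \geq 2$. Then for each $i \in \mathbb{N}$, $$\phi_{2i} = (1-q)^{-i}\, \Psi_{2i}, \qquad \phi_{2i+1} = [2i+1]_{q}\, \phi_{2i},$$ where $$\Psi_{2i} = \frac{[4]_{q}}{[2]_{q}}\, [3]_{q}\, \frac{[8]_{q}}{[4]_{q}}\, [5]_{q}\, \frac{[12]_{q}}{[6]_{q}}\, [7]_{q} \cdots [2i-1]_{q}\, \frac{[4i]_{q}}{[2i]_{q}} = \prod_{j=1}^{i} \frac{[4j]_{q}}{[2j]_{q}} \cdot \prod_{j=1}^{i-1} [2j+1]_{q}.$$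
   Context: $\mathbb{N} = \{1,2,3,\ldots\}$ and $\mathbb{Z}_{+} = \mathbb{N}\cup\{0\}$. For $0 \neq p \in \mathbb{C}$ with $p \neq 1$ and $n \in \mathbb{Z}_{+}$: $[n]_{p} = \frac{1-p^{n}}{1-p}$; this is used with $p = q$ and $p = q^{2}$. *)

theory Defs
  imports Complex_Main
begin

definition qnum :: "complex \<Rightarrow> nat \<Rightarrow> complex" where
  "qnum p n = (1 - p ^ n) / (1 - p)"

definition xi :: "complex \<Rightarrow> complex" where
  "xi q = - ((1 + q)^2) / (q - inverse q)"

fun phi :: "complex \<Rightarrow> nat \<Rightarrow> complex" where
  "phi q 0 = 1"
| "phi q (Suc 0) = 1"
| "phi q (Suc (Suc b)) = phi q (Suc b) + xi q * qnum (q^2) (Suc b) * phi q b"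

definition Psi :: "complex \<Rightarrow> nat \<Rightarrow> complex" where
  "Psi q i = (\<Prod>j=1..i. qnum q (4*j) / qnum q (2*j)) * (\<Prod>j=1..i-1. qnum q (2*j+1))"

end

theory Submission
  imports Defs
begin

(* Since [n]_(q^2) = [n]_q (1 + q^n) / (1 + q) and xi = q (1 + q) / (1 - q), the coefficient
   xi [n]_(q^2) of the recurrence equals q [n]_q (1 + q^n) / (1 - q). If phi_(2i+1) = [2i+1]_q phi_(2i),
   the recurrence gives phi_(2i+2) = [2i+1]_q (1 + q^(2i+2)) / (1 - q) phi_(2i); in the next step the
   added term is then q [2i+2]_q phi_(2i+2), so phi_(2i+3) = (1 + q [2i+2]_q) phi_(2i+2) = [2i+3]_q phi_(2i+2).
   Finally [4j]_q / [2j]_q = 1 + q^(2j), so Psi_(2i) is the product of the factors of the even steps. *)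

lemma qnum_Suc:
  assumes "p \<noteq> 1"
  shows "qnum p (Suc n) = 1 + p * qnum p n"
  using assms unfolding qnum_def by (simp add: field_simps)

lemma qnum_1:
  assumes "p \<noteq> 1"
  shows "qnum p 1 = 1"
  using assms unfolding qnum_def by simp

lemma qnum_double:
  assumes "p \<noteq> 1"
  shows "qnum p (2 * n) = qnum p n * (1 + p ^ n)"
  using assms unfolding qnum_def
  by (simp add: field_simps power_mult mult.commute[of 2] power2_eq_square algebra_simps)

lemma qnum_square:
  assumes "p \<noteq> 1" and "p \<noteq> -1"
  shows "qnum (p\<^sup>2) n = qnum p n * (1 + p ^ n) / (1 + p)"
proof -
  have "1 + p \<noteq> 0" "1 - p \<noteq> 0" using assms by (auto simp: add_eq_0_iff)
  moreover have "1 - (p\<^sup>2) ^ n = (1 - p ^ n) * (1 + p ^ n)"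
    by (simp add: power_mult[symmetric] mult.commute[of 2] power_mult power2_eq_square algebra_simps)
  moreover have "1 - p\<^sup>2 = (1 - p) * (1 + p)"
    by (simp add: power2_eq_square algebra_simps)
  ultimately show ?thesis unfolding qnum_def by simp
qed

(* No hypothesis q \<noteq> 0 is needed: inverse 0 = 0 makes both sides vanish at q = 0. *)
lemma xi_eq:
  assumes "q\<^sup>2 \<noteq> 1"
  shows "xi q = q * (1 + q) / (1 - q)"
proof (cases "q = 0")
  case False
  have "1 + q \<noteq> 0" "1 - q \<noteq> 0" using assms by (auto simp: power2_eq_1_iff add_eq_0_iff)
  moreover have "q - inverse q = - ((1 - q) * (1 + q)) / q"
    using False by (simp add: field_simps)
  ultimately show ?thesis using False unfolding xi_def by (simp add: power2_eq_square)
qed (simp add: xi_def)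

lemma xi_mult_qnum_square:
  assumes "q\<^sup>2 \<noteq> 1"
  shows "xi q * qnum (q\<^sup>2) n = q * qnum q n * (1 + q ^ n) / (1 - q)"
proof -
  have "q \<noteq> 1" "q \<noteq> -1" "1 + q \<noteq> 0" using assms by (auto simp: power2_eq_1_iff add_eq_0_iff)
  then show ?thesis by (simp add: xi_eq[OF assms] qnum_square)
qed

lemma phi_even_step:
  assumes "q\<^sup>2 \<noteq> 1" and odd: "phi q (2*i+1) = qnum q (2*i+1) * phi q (2*i)"
  shows "phi q (2*i+2) = qnum q (2*i+1) * (1 + q^(2*i+2)) / (1 - q) * phi q (2*i)"
proof -
  have "1 - q \<noteq> 0" using assms(1) by auto
  have "phi q (2*i+2) = phi q (2*i+1) + xi q * qnum (q\<^sup>2) (2*i+1) * phi q (2*i)"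
    by simp
  also have "\<dots> = qnum q (2*i+1) * (1 + q * (1 + q^(2*i+1)) / (1 - q)) * phi q (2*i)"
    unfolding odd xi_mult_qnum_square[OF assms(1)] by (simp add: algebra_simps)
  also have "1 + q * (1 + q^(2*i+1)) / (1 - q) = (1 + q^(2*i+2)) / (1 - q)"
    using \<open>1 - q \<noteq> 0\<close> by (simp add: field_simps)
  finally show ?thesis by simp
qed

lemma phi_odd:
  assumes "q\<^sup>2 \<noteq> 1"
  shows "phi q (2*i+1) = qnum q (2*i+1) * phi q (2*i)"
proof (induction i)
  case 0
  have "q \<noteq> 1" using assms by auto
  then show ?case using qnum_1[of q] by simp
next
  case (Suc i)
  have "q \<noteq> 1" using assms by auto
  have even: "phi q (2*i+2) = qnum q (2*i+1) * (1 + q^(2*i+2)) / (1 - q) * phi q (2*i)"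
    using phi_even_step[OF assms Suc.IH] .
  have "phi q (2*Suc i+1) = phi q (2*i+2) + xi q * qnum (q\<^sup>2) (2*i+2) * phi q (2*i+1)"
    by (simp add: numeral_2_eq_2)
  also have "\<dots> = phi q (2*i+2) + q * qnum q (2*i+2) * phi q (2*i+2)"
    unfolding xi_mult_qnum_square[OF assms] Suc.IH even by (simp add: algebra_simps)
  also have "\<dots> = qnum q (2*Suc i+1) * phi q (2*Suc i)"
    using qnum_Suc[OF \<open>q \<noteq> 1\<close>, of "2*i+2"] by (simp add: algebra_simps)
  finally show ?case .
qed

lemma phi_even_eq_prod:
  assumes "q\<^sup>2 \<noteq> 1"
  shows "phi q (2*i) = (\<Prod>j<i. qnum q (2*j+1) * (1 + q^(2*j+2))) / (1 - q)^i"
proof (induction i)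
  case (Suc i)
  have "phi q (2*Suc i) = qnum q (2*i+1) * (1 + q^(2*i+2)) / (1 - q) * phi q (2*i)"
    using phi_even_step[OF assms phi_odd[OF assms]] by simp
  then show ?case unfolding Suc.IH by (simp add: field_simps)
qed simp

lemma Psi_eq_prod:
  assumes "q \<noteq> 1" and "\<forall>j\<in>{1..i}. qnum q (2*j) \<noteq> 0"
  shows "Psi q i = (\<Prod>j<i. qnum q (2*j+1) * (1 + q^(2*j+2)))"
proof -
  have "(\<Prod>j=1..i. qnum q (4*j) / qnum q (2*j)) = (\<Prod>j=1..i. 1 + q^(2*j))"
  proof (rule prod.cong)
    fix j assume "j \<in> {1..i}"
    then have "qnum q (2*j) \<noteq> 0" using assms(2) by blast
    moreover have "qnum q (4*j) = qnum q (2*j) * (1 + q^(2*j))"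
      using qnum_double[OF assms(1), of "2*j"] by simp
    ultimately show "qnum q (4*j) / qnum q (2*j) = 1 + q^(2*j)" by simp
  qed simp
  also have "\<dots> = (\<Prod>j<i. 1 + q^(2*j+2))"
    by (simp add: prod.atLeast1_atMost_eq)
  finally have evens: "(\<Prod>j=1..i. qnum q (4*j) / qnum q (2*j)) = (\<Prod>j<i. 1 + q^(2*j+2))" .
  have odds: "(\<Prod>j=1..i-1. qnum q (2*j+1)) = (\<Prod>j<i. qnum q (2*j+1))"
  proof (cases i)
    case (Suc k)
    then show ?thesis using qnum_1[OF assms(1)]
      by (simp add: prod.atLeast1_atMost_eq prod.lessThan_Suc_shift del: prod.lessThan_Suc)
  qed simp
  show ?thesis unfolding Psi_def evens odds prod.distrib by (simp add: mult.commute)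
qed

theorem lemma3:
  fixes q :: complex and i :: nat
  assumes "q \<noteq> 0" and "q^2 \<noteq> 1" and "i \<ge> 1"
    and "\<forall>j\<in>{1..i}. qnum q (2*j) \<noteq> 0"
  shows "phi q (2*i) = inverse ((1 - q)^i) * Psi q i
       \<and> phi q (2*i+1) = qnum q (2*i+1) * phi q (2*i)"
proof
  have "q \<noteq> 1" using assms(2) by auto
  show "phi q (2*i) = inverse ((1 - q)^i) * Psi q i"
    unfolding phi_even_eq_prod[OF assms(2)] Psi_eq_prod[OF \<open>q \<noteq> 1\<close> assms(4)]
    by (simp add: divide_inverse mult.commute)
  show "phi q (2*i+1) = qnum q (2*i+1) * phi q (2*i)"
    using phi_odd[OF assms(2)] .
qed

end
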